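(* Let $n\ge1$. A valid configuration in $\Omega'_n$ contains no tile from the set $A_n\cup\hat A_n$.
   Context: $V_n=\{(v_0,v_1,v_2)\in\mathbb{Z}^3: 0\le v_0\le v_1\le 1,\ v_1\le v_2\le n+1\}$, elements written as words $v_0v_1v_2$. A Wang tile is $t=(a,b,c,d)$ with $\mathrm{RIGHT}(t)=a$, $\mathrm{TOP}(t)=b$, $\mathrm{LEFT}(t)=c$, $\mathrm{BOTTOM}(t)=d$; $\hat t=(b,a,d,c)$, $\hat S=\{\hat t:t\in S\}$. Define (as (right, top, left, bottom)): $W_n=\{(11(i+1),11(j+1),11i,11j):1\le i,j\le n\}$; $B'_n=\{(00(i+1),111,00i,11n):0\le i\le n\}$; $G_n=\{(01(i+1),111,00i,11(n+1)):0\le i\le n\}$; $Y_n=\{(01(i+1),112,01i,11(n+1)):1\le i\le n\}$; $A_n=\{(00(i+1),112,01i,11n):1\le i\le n\}$ (antigreen tiles); $J'_n=\{((0,k,l),(0,r,s),(0,s,r+n),(0,l,k+n)):(k,l),(r,s)\in\{(0,0),(0,1),(1,1)\}\}$. $\mathcal T'_n=W_n\cup B'_n\cup G_n\cup Y_n\cup A_n\cup\hat B'_n\cup\hat G_n\cup\hat Y_n\cup\hat A_n\cup J'_n$. $\Omega'_n$ is the set of configurations $c:\mathbb Z^2\to\mathcal T'_n$ with $\mathrm{RIGHT}(c(\mathbf m))=\mathrm{LEFT}(c(\mathbf m+\mathbf e_1))$ and $\mathrm{TOP}(c(\mathbf m))=\mathrm{BOTTOM}(c(\mathbf m+\mathbf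 e_2))$ for all $\mathbf m$. *)

theory Defs
  imports Main
begin

text \<open>Colours are words v0 v1 v2, represented as integer triples.\<close>
type_synonym color = "int \<times> int \<times> int"

text \<open>A Wang tile (right, top, left, bottom).\<close>
type_synonym tile = "color \<times> color \<times> color \<times> color"

definition RIGHT :: "tile \<Rightarrow> color" where "RIGHT t = (case t of (a,b,c,d) \<Rightarrow> a)"
definition TOP :: "tile \<Rightarrow> color" where "TOP t = (case t of (a,b,c,d) \<Rightarrow> b)"
definition LEFT :: "tile \<Rightarrow> color" where "LEFT t = (case t of (a,b,c,d) \<Rightarrow> c)"
definition BOTTOM :: "tile \<Rightarrow> color" where "BOTTOM t = (case t of (a,b,c,d) \<Rightarrow> d)"

definition V :: "nat \<Rightarrow> color set" where
  "V n = {(v0,v1,v2). 0 \<le> v0 \<and> v0 \<le> v1 \<and> v1 \<le> 1 \<and> v1 \<le> v2 \<and> v2 \<le> int n + 1}"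

definition hat :: "tile \<Rightarrow> tile" where
  "hat t = (case t of (a,b,c,d) \<Rightarrow> (b,a,d,c))"

definition hatS :: "tile set \<Rightarrow> tile set" where
  "hatS S = hat ` S"

definition W :: "nat \<Rightarrow> tile set" where
  "W n = {((1,1,i+1),(1,1,j+1),(1,1,i),(1,1,j)) | i j. 1 \<le> i \<and> i \<le> int n \<and> 1 \<le> j \<and> j \<le> int n}"

definition B' :: "nat \<Rightarrow> tile set" where
  "B' n = {((0,0,i+1),(1,1,1),(0,0,i),(1,1,int n)) | i. 0 \<le> i \<and> i \<le> int n}"

definition G :: "nat \<Rightarrow> tile set" where
  "G n = {((0,1,i+1),(1,1,1),(0,0,i),(1,1,int n+1)) | i. 0 \<le> i \<and> i \<le> int n}"

definition Y :: "nat \<Rightarrow> tile set" where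
  "Y n = {((0,1,i+1),(1,1,2),(0,1,i),(1,1,int n+1)) | i. 1 \<le> i \<and> i \<le> int n}"

definition A :: "nat \<Rightarrow> tile set" where
  "A n = {((0,0,i+1),(1,1,2),(0,1,i),(1,1,int n)) | i. 1 \<le> i \<and> i \<le> int n}"

definition J' :: "nat \<Rightarrow> tile set" where
  "J' n = {((0,k,l),(0,r,s),(0,s,r+int n),(0,l,k+int n)) | k l r s.
             (k,l) \<in> {(0,0),(0,1),(1,1)} \<and> (r,s) \<in> {(0,0),(0,1),(1,1)}}"

definition T' :: "nat \<Rightarrow> tile set" where
  "T' n = W n \<union> B' n \<union> G n \<union> Y n \<union> A n \<union> hatS (B' n) \<union> hatS (G n)
          \<union> hatS (Y n) \<union> hatS (A n) \<union> J' n"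

definition Omega' :: "nat \<Rightarrow> (int \<times> int \<Rightarrow> tile) set" where
  "Omega' n = {c. (\<forall>m. c m \<in> T' n) \<and>
      (\<forall>x y. RIGHT (c (x,y)) = LEFT (c (x+1,y)) \<and> TOP (c (x,y)) = BOTTOM (c (x,y+1)))}"

end

theory Submission
  imports Defs
begin

text \<open>
  Across every tile the first entry of the colour is the same on the left and right edge, and on
  the bottom and top edge. So in a valid configuration it is constant along each row (for
  horizontal colours) and along each column (for vertical colours): every row and column has a
  kind 0 or 1. A tile in a kind-1 row raises the level (last entry) of the vertical colour by one,
  and all levels lie in [0, n+1]; hence above every row there is a kind-0 row, and, transposing,
  right of every column a kind-0 column.

  Let an antigreen tile sit at (x, y), let b > x be a kind-0 column and y + g the next kind-0 row
  above y. Counting levels up column x, from the top colour 112 of the antigreen tile to the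
  bottom colour 11n or 11(n+1) of a tile of B', G, Y or A, gives g \<le> n; counting up column b,
  between two tiles of J', gives g \<ge> n. So g = n, and then the tile at (x+1, y+n) is antigreen
  again (column x+1 cannot have kind 0: its tile in row y would be a tile of J' whose left colour
  00(i+1) contradicts g = n). Induction on b - x excludes A; the transposed configuration
  (x, y) \<mapsto> hat (c (y, x)) excludes hat A.
\<close>

definition level :: "color \<Rightarrow> int" where
  "level v = snd (snd v)"

text \<open>
  The tiles of B', G, Y and A are band_tile n a b i for (a, b) = (0, 0), (0, 1), (1, 1) and
  (1, 0) respectively; a and b are the middle entries of the left and right colour.
\<close>
definition band_tile :: "nat \<Rightarrow> int \<Rightarrow> int \<Rightarrow> int \<Rightarrow> tile" where
  "band_tile n a b i = ((0,b,i+1),(1,1,1+a),(0,a,i),(1,1,int n+b))"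

lemma B'_G_Y_A_subset_band_tiles:
  "B' n \<union> G n \<union> Y n \<union> A n \<subseteq>
     {band_tile n a b i | a b i. a \<in> {0,1} \<and> b \<in> {0,1} \<and> a \<le> i \<and> i \<le> int n}"
  unfolding B'_def G_def Y_def A_def band_tile_def by force

lemma A_subset_band_tiles: "A n \<subseteq> range (band_tile n 1 0)"
  unfolding A_def band_tile_def by force

lemma hat_hat [simp]: "hat (hat t) = t"
  by (cases t) (simp add: hat_def)

lemma hat_sides [simp]:
  "RIGHT (hat t) = TOP t" "TOP (hat t) = RIGHT t" "LEFT (hat t) = BOTTOM t" "BOTTOM (hat t) = LEFT t"
  by (cases t; simp add: hat_def RIGHT_def LEFT_def TOP_def BOTTOM_def)+

lemma inj_hat: "inj hat"
  by (metis hat_hat injI)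

lemma in_hatS_iff: "t \<in> hatS S \<longleftrightarrow> hat t \<in> S"
  unfolding hatS_def by (metis hat_hat inj_hat inj_image_mem_iff)

lemma hat_W: "t \<in> W n \<Longrightarrow> hat t \<in> W n"
  unfolding W_def hat_def by force

lemma hat_J': "t \<in> J' n \<Longrightarrow> hat t \<in> J' n"
  unfolding J'_def hat_def by force

lemma hat_T': "t \<in> T' n \<Longrightarrow> hat t \<in> T' n"
  using hat_W[of t n] hat_J'[of t n] unfolding T'_def by (auto simp: in_hatS_iff)

lemma T'_cases:
  assumes "t \<in> T' n"
  obtains (W) "t \<in> W n"
  | (band) a b i where "t = band_tile n a b i" "a \<in> {0,1}" "b \<in> {0,1}" "a \<le> i" "i \<le> int n"
  | (hat_band) a b i where "t = hat (band_tile n a b i)"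
      "a \<in> {0,1}" "b \<in> {0,1}" "a \<le> i" "i \<le> int n"
  | (J') "t \<in> J' n"
proof -
  have "t \<in> W n \<union> (B' n \<union> G n \<union> Y n \<union> A n) \<union> hat ` (B' n \<union> G n \<union> Y n \<union> A n)
          \<union> J' n"
    using assms unfolding T'_def hatS_def by blast
  then show thesis
    using B'_G_Y_A_subset_band_tiles[of n] that by blast
qed

lemma kind_TOP_eq_kind_BOTTOM: "t \<in> T' n \<Longrightarrow> fst (TOP t) = fst (BOTTOM t)"
  by (erule T'_cases) (auto simp: W_def J'_def band_tile_def hat_def TOP_def BOTTOM_def)

lemma kind_BOTTOM_cases: "t \<in> T' n \<Longrightarrow> fst (BOTTOM t) = 0 \<or> fst (BOTTOM t) = 1"
  by (erule T'_cases) (auto simp: W_def J'_def band_tile_def hat_def BOTTOM_def)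

lemma level_TOP_eq_level_BOTTOM_plus_1:
  "t \<in> T' n \<Longrightarrow> fst (LEFT t) = 1 \<Longrightarrow> level (TOP t) = level (BOTTOM t) + 1"
  by (erule T'_cases)
    (auto simp: W_def J'_def band_tile_def hat_def LEFT_def TOP_def BOTTOM_def level_def)

lemma T'_colours_in_V:
  assumes "1 \<le> n" "t \<in> T' n"
  shows "RIGHT t \<in> V n" "TOP t \<in> V n" "LEFT t \<in> V n" "BOTTOM t \<in> V n"
  using assms(2) by (cases rule: T'_cases; use assms(1) in
    \<open>auto simp: V_def W_def J'_def band_tile_def hat_def RIGHT_def TOP_def LEFT_def BOTTOM_def\<close>)+

lemma J'_levels:
  assumes "t \<in> J' n"
  shows "level (TOP t) \<le> 1" "int n \<le> level (BOTTOM t)" "fst (snd (LEFT t)) = level (TOP t)"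
  using assms by (auto simp: J'_def TOP_def BOTTOM_def LEFT_def level_def)

lemma Omega'_D:
  assumes "c \<in> Omega' n"
  shows "c m \<in> T' n" "RIGHT (c (x,y)) = LEFT (c (x+1,y))" "TOP (c (x,y)) = BOTTOM (c (x,y+1))"
  using assms unfolding Omega'_def by (cases m; simp)+

definition transpose_config :: "(int \<times> int \<Rightarrow> tile) \<Rightarrow> int \<times> int \<Rightarrow> tile" where
  "transpose_config c = (\<lambda>(x,y). hat (c (y,x)))"

lemma transpose_config_apply [simp]: "transpose_config c (x,y) = hat (c (y,x))"
  by (simp add: transpose_config_def)

lemma transpose_config_Omega':
  assumes "c \<in> Omega' n"
  shows "transpose_config c \<in> Omega' n"
  unfolding Omega'_def
proof (intro CollectI conjI allI)
  show "transpose_config c m \<in> T' n" for m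
    by (cases m) (simp add: hat_T' Omega'_D(1)[OF assms])
  show "RIGHT (transpose_config c (x,y)) = LEFT (transpose_config c (x+1,y))"
    and "TOP (transpose_config c (x,y)) = BOTTOM (transpose_config c (x,y+1))" for x y
    using Omega'_D(2,3)[OF assms, of y x] by simp_all
qed

definition col_kind :: "(int \<times> int \<Rightarrow> tile) \<Rightarrow> int \<Rightarrow> int" where
  "col_kind c x = fst (BOTTOM (c (x,0)))"

definition row_kind :: "(int \<times> int \<Rightarrow> tile) \<Rightarrow> int \<Rightarrow> int" where
  "row_kind c y = fst (LEFT (c (0,y)))"

lemma col_kind_transpose_config: "col_kind (transpose_config c) = row_kind c"
  by (simp add: fun_eq_iff row_kind_def col_kind_def)

lemma row_kind_transpose_config: "row_kind (transpose_config c) = col_kind c"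
  by (simp add: fun_eq_iff row_kind_def col_kind_def)

lemma kind_BOTTOM_eq_col_kind:
  assumes "c \<in> Omega' n"
  shows "fst (BOTTOM (c (x,y))) = col_kind c x"
proof (induction y rule: int_induct[where k = 0])
  case base
  show ?case by (simp add: col_kind_def)
next
  case (step1 y)
  then show ?case
    using Omega'_D(3)[OF assms, of x y]
      kind_TOP_eq_kind_BOTTOM[OF Omega'_D(1)[OF assms, of "(x,y)"]]
    by simp
next
  case (step2 y)
  then show ?case
    using Omega'_D(3)[OF assms, of x "y - 1"]
      kind_TOP_eq_kind_BOTTOM[OF Omega'_D(1)[OF assms, of "(x,y-1)"]]
    by simp
qed

lemma kind_LEFT_eq_row_kind: "c \<in> Omega' n \<Longrightarrow> fst (LEFT (c (x,y))) = row_kind c y"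
  using kind_BOTTOM_eq_col_kind[OF transpose_config_Omega', of c n y x]
  by (simp add: col_kind_transpose_config)

lemma col_kind_cases: "c \<in> Omega' n \<Longrightarrow> col_kind c x = 0 \<or> col_kind c x = 1"
  using kind_BOTTOM_cases[OF Omega'_D(1)] kind_BOTTOM_eq_col_kind[of c n x 0] by metis

lemma row_kind_cases: "c \<in> Omega' n \<Longrightarrow> row_kind c y = 0 \<or> row_kind c y = 1"
  using col_kind_cases[OF transpose_config_Omega', of c n y] by (simp add: col_kind_transpose_config)

lemma band_tile_at:
  assumes "c \<in> Omega' n" "row_kind c y = 0" "col_kind c x = 1"
  obtains a b i where "c (x,y) = band_tile n a b i" "b \<in> {0,1}"
proof -
  have "fst (LEFT (c (x,y))) = 0" "fst (BOTTOM (c (x,y))) = 1"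
    using assms kind_LEFT_eq_row_kind kind_BOTTOM_eq_col_kind by simp_all
  with Omega'_D(1)[OF assms(1)] show thesis
    using that
    by (cases rule: T'_cases) (auto simp: W_def J'_def band_tile_def hat_def LEFT_def BOTTOM_def)
qed

lemma J'_tile_at:
  assumes "c \<in> Omega' n" "row_kind c y = 0" "col_kind c x = 0"
  shows "c (x,y) \<in> J' n"
proof -
  have "fst (LEFT (c (x,y))) = 0" "fst (BOTTOM (c (x,y))) = 0"
    using assms kind_LEFT_eq_row_kind kind_BOTTOM_eq_col_kind by simp_all
  with Omega'_D(1)[OF assms(1)] show ?thesis
    by (cases rule: T'_cases) (auto simp: W_def band_tile_def hat_def LEFT_def BOTTOM_def)
qed

lemma level_BOTTOM_above_kind_1_rows:
  assumes "c \<in> Omega' n" "0 < g" "\<forall>y'\<in>{y<..<y + int g}. row_kind c y' = 1"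
  shows "level (BOTTOM (c (x, y + int g))) = level (TOP (c (x,y))) + int g - 1"
  using assms(2,3)
proof (induction g)
  case 0
  then show ?case by simp
next
  case (Suc g)
  show ?case
  proof (cases "g = 0")
    case True
    then show ?thesis using Omega'_D(3)[OF assms(1), of x y] by simp
  next
    case False
    then have IH: "level (BOTTOM (c (x, y + int g))) = level (TOP (c (x,y))) + int g - 1"
      using Suc by simp
    have "row_kind c (y + int g) = 1" using Suc.prems(2) False by simp
    then have "level (TOP (c (x, y + int g))) = level (BOTTOM (c (x, y + int g))) + 1"
      using level_TOP_eq_level_BOTTOM_plus_1[OF Omega'_D(1)[OF assms(1)]]
        kind_LEFT_eq_row_kind[OF assms(1)] by simp
    moreover have "BOTTOM (c (x, y + int (Suc g))) = TOP (c (x, y + int g))"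
      using Omega'_D(3)[OF assms(1), of x "y + int g"] by (simp add: algebra_simps)
    ultimately show ?thesis using IH by simp
  qed
qed

lemma next_kind_0_row_above:
  assumes "1 \<le> n" "c \<in> Omega' n"
  obtains g where "0 < g" "row_kind c (y + int g) = 0" "\<forall>y'\<in>{y<..<y + int g}. row_kind c y' = 1"
proof -
  have "\<exists>g>0. row_kind c (y + int g) = 0"
  proof (rule ccontr)
    assume none: "\<not> ?thesis"
    have kind_1: "row_kind c y' = 1" if "y < y'" for y'
    proof -
      have "y' = y + int (nat (y' - y))" "0 < nat (y' - y)" using that by simp_all
      then show ?thesis using none row_kind_cases[OF assms(2), of y'] by metis
    qed
    define top where "top = (\<lambda>y'. level (TOP (c (0, y'))))"
    have "top (y + int (n + 2)) = level (BOTTOM (c (0, y + int (n + 2)))) + 1"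
      unfolding top_def using level_TOP_eq_level_BOTTOM_plus_1[OF Omega'_D(1)[OF assms(2)]]
        kind_LEFT_eq_row_kind[OF assms(2)] kind_1[of "y + int (n + 2)"] by simp
    also have "\<dots> = top y + int n + 2"
      unfolding top_def using level_BOTTOM_above_kind_1_rows[OF assms(2), of "n + 2" y 0] kind_1
      by simp
    finally have "top (y + int (n + 2)) = top y + int n + 2" .
    moreover have bounds: "0 \<le> top y'" "top y' \<le> int n + 1" for y'
      unfolding top_def using T'_colours_in_V(2)[OF assms(1) Omega'_D(1)[OF assms(2)], of "(0,y')"]
      by (auto simp: V_def level_def split: prod.splits)
    ultimately show False
      using bounds(1)[of y] bounds(2)[of "y + int (n + 2)"] by linarith
  qed
  then obtain g where g: "0 < g" "row_kind c (y + int g) = 0"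
    and least: "\<And>d. d < g \<Longrightarrow> \<not> (0 < d \<and> row_kind c (y + int d) = 0)"
    using exists_least_iff[of "\<lambda>g. 0 < g \<and> row_kind c (y + int g) = 0"] by blast
  have "row_kind c y' = 1" if "y' \<in> {y<..<y + int g}" for y'
  proof -
    have "y' = y + int (nat (y' - y))" "0 < nat (y' - y)" "nat (y' - y) < g" using that by auto
    then show ?thesis using least row_kind_cases[OF assms(2), of y'] by metis
  qed
  then show thesis using that g by blast
qed

lemma kind_0_col_right_of:
  assumes "1 \<le> n" "c \<in> Omega' n"
  obtains b where "x < b" "col_kind c b = 0"
proof -
  obtain g where "0 < g" "row_kind (transpose_config c) (x + int g) = 0"
    using next_kind_0_row_above[OF assms(1) transpose_config_Omega'[OF assms(2)]] by blast
  then show thesis using that[of "x + int g"] by (simp add: row_kind_transpose_config)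
qed

lemma antigreen_tile_next_kind_0_row:
  assumes \<Omega>: "c \<in> Omega' n" and antigreen: "c (x,y) = band_tile n 1 0 i"
    and junction_col: "col_kind c b = 0"
    and g: "0 < g" "row_kind c (y + int g) = 0" "\<forall>y'\<in>{y<..<y + int g}. row_kind c y' = 1"
  shows "g = n" "level (TOP (c (b,y))) = 1" "fst (snd (RIGHT (c (x, y + int g)))) = 1"
proof -
  have row_y: "row_kind c y = 0" and col_x: "col_kind c x = 1"
    using kind_LEFT_eq_row_kind[OF \<Omega>, of x y] kind_BOTTOM_eq_col_kind[OF \<Omega>, of x y] antigreen
    by (simp_all add: band_tile_def LEFT_def BOTTOM_def)
  obtain a' b' i' where band: "c (x, y + int g) = band_tile n a' b' i'" and "b' \<in> {0,1}"
    using band_tile_at[OF \<Omega> g(2) col_x] .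
  moreover have "int n + b' = int g + 1"
    using level_BOTTOM_above_kind_1_rows[OF \<Omega> g(1,3), of x] antigreen band
    by (simp add: band_tile_def TOP_def BOTTOM_def level_def)
  moreover have "c (b, y) \<in> J' n" "c (b, y + int g) \<in> J' n"
    using J'_tile_at[OF \<Omega>] row_y g(2) junction_col by simp_all
  then have "level (TOP (c (b,y))) \<le> 1" "int n \<le> level (TOP (c (b,y))) + int g - 1"
    using J'_levels level_BOTTOM_above_kind_1_rows[OF \<Omega> g(1,3), of b] by metis+
  ultimately show "g = n" "level (TOP (c (b,y))) = 1" "fst (snd (RIGHT (c (x, y + int g)))) = 1"
    by (auto simp: band_tile_def RIGHT_def)
qed

lemma antigreen_tile_propagates:
  assumes "1 \<le> n" and \<Omega>: "c \<in> Omega' n" and antigreen: "c (x,y) = band_tile n 1 0 i"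
    and junction_col: "x < b" "col_kind c b = 0"
  obtains y' i' where "x + 1 < b" "c (x + 1, y') = band_tile n 1 0 i'"
proof -
  obtain g where g: "0 < g" "row_kind c (y + int g) = 0" "\<forall>y'\<in>{y<..<y + int g}. row_kind c y' = 1"
    using next_kind_0_row_above[OF assms(1,2)] by blast
  note next_row = antigreen_tile_next_kind_0_row[OF \<Omega> antigreen _ g]
  have row_y: "row_kind c y = 0" and left_x1: "LEFT (c (x + 1, y)) = (0, 0, i + 1)"
    using kind_LEFT_eq_row_kind[OF \<Omega>, of x y] Omega'_D(2)[OF \<Omega>, of x y] antigreen
    by (simp_all add: band_tile_def LEFT_def RIGHT_def)
  have col_x1: "col_kind c (x + 1) = 1"
  proof (rule ccontr)
    assume "col_kind c (x + 1) \<noteq> 1"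
    then have "col_kind c (x + 1) = 0" using col_kind_cases[OF \<Omega>] by blast
    then have "c (x + 1, y) \<in> J' n" "level (TOP (c (x + 1, y))) = 1"
      using J'_tile_at[OF \<Omega> row_y] next_row(2) by simp_all
    then show False using J'_levels(3) left_x1 by fastforce
  qed
  then have "x + 1 < b" using junction_col by (cases "x + 1 = b") auto
  obtain a2 b2 i2 where band2: "c (x + 1, y) = band_tile n a2 b2 i2"
    using band_tile_at[OF \<Omega> row_y col_x1] .
  obtain a3 b3 i3 where band3: "c (x + 1, y + int g) = band_tile n a3 b3 i3"
    using band_tile_at[OF \<Omega> g(2) col_x1] .
  have "a2 = 0" using band2 left_x1 by (simp add: band_tile_def LEFT_def)
  then have "b3 = 0"
    using level_BOTTOM_above_kind_1_rows[OF \<Omega> g(1,3), of "x + 1"] band2 band3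
      next_row(1)[OF junction_col(2)]
    by (simp add: band_tile_def TOP_def BOTTOM_def level_def)
  moreover have "a3 = 1"
    using Omega'_D(2)[OF \<Omega>, of x "y + int g"] next_row(3)[OF junction_col(2)] band3
    by (simp add: band_tile_def LEFT_def)
  ultimately show thesis using that \<open>x + 1 < b\<close> band3 by blast
qed

lemma no_antigreen_tile_left_of_kind_0_col:
  assumes "1 \<le> n" "c \<in> Omega' n" "c (x,y) = band_tile n 1 0 i" "x < b" "col_kind c b = 0"
  shows False
  using assms(3,4)
proof (induction "nat (b - x)" arbitrary: x y i rule: less_induct)
  case less
  obtain y' i' where "x + 1 < b" "c (x + 1, y') = band_tile n 1 0 i'"
    using antigreen_tile_propagates[OF assms(1,2) less.prems assms(5)] .
  then show False using less.hyps[of "x + 1"] by simp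
qed

lemma no_A_tile:
  assumes "1 \<le> n" "c \<in> Omega' n"
  shows "c m \<notin> A n"
proof
  assume "c m \<in> A n"
  moreover obtain x y where "m = (x,y)" by fastforce
  ultimately obtain i where "c (x,y) = band_tile n 1 0 i" using A_subset_band_tiles by blast
  moreover obtain b where "x < b" "col_kind c b = 0"
    using kind_0_col_right_of[OF assms] by blast
  ultimately show False
    using no_antigreen_tile_left_of_kind_0_col[OF assms] by blast
qed

theorem lemma7p2:
  fixes n :: nat and c :: "int \<times> int \<Rightarrow> tile"
  assumes "1 \<le> n" and "c \<in> Omega' n"
  shows "\<forall>m. c m \<notin> A n \<union> hatS (A n)"
proof
  fix m :: "int \<times> int"
  obtain x y where m: "m = (x,y)" by fastforce
  have "c m \<notin> A n" using no_A_tile[OF assms] .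
  moreover have "transpose_config c (y,x) \<notin> A n"
    using no_A_tile[OF assms(1) transpose_config_Omega'[OF assms(2)]] .
  then have "c m \<notin> hatS (A n)"
    using m by (simp add: in_hatS_iff)
  ultimately show "c m \<notin> A n \<union> hatS (A n)" by blast
qed

end
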